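(* Let $\phi:Z\to[-\infty,+\infty]$ be proper and closed, and suppose Assumptions (A1) and (A2) hold for some $\lambda\in\mathbb R$. Let $\tau\in(0,1/\lambda^-)$ and $(x',y')\in D\phi$. Then $\phi^Y_\tau(x;y')>-\infty$ for every $x\in X$, and $\phi^X_\tau(y;x')<+\infty$ for every $y\in Y$.
   Context: $(X,\mathsf d_X)$, $(Y,\mathsf d_Y)$ complete metric spaces; $Z=X\times Y$. $D_X\phi=\{x:\phi(x,y)<+\infty\ \forall y\}$, $D_Y\phi=\{y:\phi(x,y)>-\infty\ \forall x\}$, $D\phi=D_X\phi\times D_Y\phi$; proper: $D\phi\ne\emptyset$; closed: for $x\in D_X\phi$, $y\mapsto\phi(x,y)$ upper semicontinuous, for $y\in D_Y\phi$, $x\mapsto\phi(x,y)$ lower semicontinuous. (A1): $\phi=+\infty$ on $(X\setminus D_X\phi)\times D_Y\phi$, $\phi=-\infty$ on $D_X\phi\times(Y\setminus D_Y\phi)$. $\lambda^-=\max\{-\lambda,0\}$, $1/\lambda^-:=+\infty$ if $\lambda^-=0$. $\Phi_\tau(x,y;x',y')=\phi(x',y')+\frac1{2\tau}(\mathsf d_X^2(x',x)-\mathsf d_Y^2(y',y))$. $f$ on $Z$ is $\mu$-convex-concave along curves $\gamma,\sigma$ if for all $t\in[0,1]$: $f(\gamma_t,y)\le(1-t)f(\gamma_0,y)+tf(\gamma_1,y)-\frac\mu2t(1-t)\mathsf d_X^2(\gamma_0,\gamma_1)$ for all $y$, and $f(x,\sigma_t)\ge(1-t)f(x,\sigma_0)+tf(x,\sigma_1)+\frac\mu2t(1-t)\mathsf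 d_Y^2(\sigma_0,\sigma_1)$ for all $x$. (A2) for $\lambda$: for every $(x,y)\in Z$, $(x_0,y_0),(x_1,y_1)\in D\phi$ there are continuous curves $\gamma$ from $x_0$ to $x_1$, $\sigma$ from $y_0$ to $y_1$ such that for all $\tau\in(0,1/\lambda^-)$, $(x',y')\mapsto\Phi_\tau(x,y;x',y')$ is $(\tau^{-1}+\lambda)$-convex-concave along them. $\phi^X_\tau(y;x')=\sup_{y'\in Y}\{\phi(x',y')-\frac1{2\tau}\mathsf d_Y^2(y',y)\}$, $\phi^Y_\tau(x;y')=\inf_{x''\in X}\{\phi(x'',y')+\frac1{2\tau}\mathsf d_X^2(x'',x)\}$. *)

theory Defs
  imports "HOL-Analysis.Analysis" "HOL-Library.Extended_Real"
begin

definition DX :: "('a \<Rightarrow> 'b \<Rightarrow> ereal) \<Rightarrow> 'a set" where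
  "DX \<phi> = {x. \<forall>y. \<phi> x y < \<infinity>}"

definition DY :: "('a \<Rightarrow> 'b \<Rightarrow> ereal) \<Rightarrow> 'b set" where
  "DY \<phi> = {y. \<forall>x. \<phi> x y > -\<infinity>}"

definition proper_fun :: "('a \<Rightarrow> 'b \<Rightarrow> ereal) \<Rightarrow> bool" where
  "proper_fun \<phi> \<longleftrightarrow> DX \<phi> \<times> DY \<phi> \<noteq> {}"

definition lsc_fun :: "('a::topological_space \<Rightarrow> ereal) \<Rightarrow> bool" where
  "lsc_fun f \<longleftrightarrow> (\<forall>c. open {x. c < f x})"

definition usc_fun :: "('a::topological_space \<Rightarrow> ereal) \<Rightarrow> bool" where
  "usc_fun f \<longleftrightarrow> (\<forall>c. open {x. f x < c})"

definition closed_fun :: "('a::topological_space \<Rightarrow> 'b::topological_space \<Rightarrow> ereal) \<Rightarrow> bool" where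
  "closed_fun \<phi> \<longleftrightarrow> (\<forall>x\<in>DX \<phi>. usc_fun (\<lambda>y. \<phi> x y)) \<and> (\<forall>y\<in>DY \<phi>. lsc_fun (\<lambda>x. \<phi> x y))"

definition A1 :: "('a \<Rightarrow> 'b \<Rightarrow> ereal) \<Rightarrow> bool" where
  "A1 \<phi> \<longleftrightarrow> (\<forall>x. x \<notin> DX \<phi> \<longrightarrow> (\<forall>y\<in>DY \<phi>. \<phi> x y = \<infinity>))
              \<and> (\<forall>x\<in>DX \<phi>. \<forall>y. y \<notin> DY \<phi> \<longrightarrow> \<phi> x y = -\<infinity>)"

definition lambda_minus :: "real \<Rightarrow> real" where
  "lambda_minus l = max (- l) 0"

(* \<tau> \<in> (0, 1/lam^-), with 1/lam^- = +\<infinity> when lam^- = 0 *)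
definition tau_adm :: "real \<Rightarrow> real \<Rightarrow> bool" where
  "tau_adm lam \<tau> \<longleftrightarrow> 0 < \<tau> \<and> (lambda_minus lam = 0 \<or> \<tau> < 1 / lambda_minus lam)"

definition Phi_tau :: "('a::metric_space \<Rightarrow> 'b::metric_space \<Rightarrow> ereal) \<Rightarrow> real \<Rightarrow> 'a \<Rightarrow> 'b \<Rightarrow> 'a \<Rightarrow> 'b \<Rightarrow> ereal" where
  "Phi_tau \<phi> \<tau> x y x' y' = \<phi> x' y' + ereal (((dist x' x)\<^sup>2 - (dist y' y)\<^sup>2) / (2 * \<tau>))"

definition cc_along :: "('a::metric_space \<Rightarrow> 'b::metric_space \<Rightarrow> ereal) \<Rightarrow> real \<Rightarrow> (real \<Rightarrow> 'a) \<Rightarrow> (real \<Rightarrow> 'b) \<Rightarrow> bool" where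
  "cc_along f \<mu> \<gamma> \<sigma> \<longleftrightarrow> (\<forall>t\<in>{0..1}.
      (\<forall>y. f (\<gamma> t) y \<le> ereal (1 - t) * f (\<gamma> 0) y + ereal t * f (\<gamma> 1) y
                         - ereal (\<mu> / 2 * t * (1 - t) * (dist (\<gamma> 0) (\<gamma> 1))\<^sup>2))
    \<and> (\<forall>x. f x (\<sigma> t) \<ge> ereal (1 - t) * f x (\<sigma> 0) + ereal t * f x (\<sigma> 1)
                         + ereal (\<mu> / 2 * t * (1 - t) * (dist (\<sigma> 0) (\<sigma> 1))\<^sup>2)))"

definition A2 :: "('a::metric_space \<Rightarrow> 'b::metric_space \<Rightarrow> ereal) \<Rightarrow> real \<Rightarrow> bool" where
  "A2 \<phi> lam \<longleftrightarrow> (\<forall>x y. \<forall>x0\<in>DX \<phi>. \<forall>y0\<in>DY \<phi>. \<forall>x1\<in>DX \<phi>. \<forall>y1\<in>DY \<phi>.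
      \<exists>\<gamma> \<sigma>. continuous_on {0..1} \<gamma> \<and> \<gamma> 0 = x0 \<and> \<gamma> 1 = x1
           \<and> continuous_on {0..1} \<sigma> \<and> \<sigma> 0 = y0 \<and> \<sigma> 1 = y1
           \<and> (\<forall>\<tau>. tau_adm lam \<tau> \<longrightarrow> cc_along (Phi_tau \<phi> \<tau> x y) (1 / \<tau> + lam) \<gamma> \<sigma>))"

definition phiX_tau :: "('a::metric_space \<Rightarrow> 'b::metric_space \<Rightarrow> ereal) \<Rightarrow> real \<Rightarrow> 'b \<Rightarrow> 'a \<Rightarrow> ereal" where
  "phiX_tau \<phi> \<tau> y x' = (SUP y'. \<phi> x' y' - ereal ((dist y' y)\<^sup>2 / (2 * \<tau>)))"

definition phiY_tau :: "('a::metric_space \<Rightarrow> 'b::metric_space \<Rightarrow> ereal) \<Rightarrow> real \<Rightarrow> 'a \<Rightarrow> 'b \<Rightarrow> ereal" where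
  "phiY_tau \<phi> \<tau> x y' = (INF x''. \<phi> x'' y' + ereal ((dist x'' x)\<^sup>2 / (2 * \<tau>)))"

end

theory Submission
  imports Defs
begin

(* Fix y' and let f = phi(., y'), which is real-valued wherever it is below +infinity.
   For every such z, (A2) gives a curve gamma from x' to z along which
   f + d^2(., x')/(2 tau') is (1/tau' + lambda)-convex for all admissible tau' at once.
   Letting tau' -> 0 forces d(gamma_t, x') <= t d(z, x'), so for t = r/(2 d(z, x')) the point
   gamma_t lies in a ball on which f >= f(x') - 1 by lower semicontinuity; the convexity
   inequality at tau then yields f(z) >= f(x') - 1 - K d(z, x') - lambda^-/2 d(z, x')^2.
   Since 1/(2 tau) > lambda^-/2, adding d^2(z, x)/(2 tau) gives a function bounded below.
   The bound for phi^X_tau is the same argument applied to -phi(x', .). *)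

lemma tau_adm_mono: "tau_adm lam \<tau> \<Longrightarrow> 0 < \<tau>' \<Longrightarrow> \<tau>' \<le> \<tau> \<Longrightarrow> tau_adm lam \<tau>'"
  unfolding tau_adm_def by auto

lemma tau_adm_lambda_minus: "tau_adm lam \<tau> \<Longrightarrow> lambda_minus lam * \<tau> < 1"
  unfolding tau_adm_def lambda_minus_def
  by (cases "max (- lam) 0 = 0") (auto simp: field_simps)

lemma tau_adm_modulus_pos: "tau_adm lam \<tau> \<Longrightarrow> 0 < 1 / \<tau> + lam"
proof -
  assume tau: "tau_adm lam \<tau>"
  then have "lambda_minus lam < 1 / \<tau>"
    using tau_adm_lambda_minus[OF tau] unfolding tau_adm_def by (simp add: field_simps)
  moreover have "- lam \<le> lambda_minus lam"
    unfolding lambda_minus_def by simp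
  ultimately show ?thesis by linarith
qed

lemma nonpos_if_divide_bounded:
  fixes a M \<delta> :: real
  assumes "0 < \<delta>" and bounded: "\<And>\<epsilon>. 0 < \<epsilon> \<Longrightarrow> \<epsilon> \<le> \<delta> \<Longrightarrow> a / \<epsilon> \<le> M"
  shows "a \<le> 0"
proof (rule ccontr)
  assume "\<not> a \<le> 0"
  define \<epsilon> where "\<epsilon> = min \<delta> (a / (\<bar>M\<bar> + 1))"
  have "0 < \<epsilon>" and "\<epsilon> \<le> a / (\<bar>M\<bar> + 1)"
    using \<open>\<not> a \<le> 0\<close> \<open>0 < \<delta>\<close> by (auto simp: \<epsilon>_def)
  then have "\<bar>M\<bar> + 1 \<le> a / \<epsilon>"
    by (simp add: field_simps)
  moreover have "a / \<epsilon> \<le> M"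
    using bounded \<open>0 < \<epsilon>\<close> by (simp add: \<epsilon>_def)
  ultimately show False by linarith
qed

lemma curve_point_dist_le:
  fixes f :: "'a::metric_space \<Rightarrow> real"
  assumes tau: "tau_adm lam \<tau>" and "0 \<le> t"
    and ineq: "\<And>\<tau>'. tau_adm lam \<tau>' \<Longrightarrow> f p + (dist p x0)\<^sup>2 / (2 * \<tau>')
      \<le> (1 - t) * f x0 + t * (f z + (dist z x0)\<^sup>2 / (2 * \<tau>'))
         - (1 / \<tau>' + lam) / 2 * t * (1 - t) * (dist x0 z)\<^sup>2"
  shows "dist p x0 \<le> t * dist z x0"
proof -
  define b where "b = dist z x0"
  define M where "M = (1 - t) * f x0 + t * f z - lam / 2 * t * (1 - t) * b\<^sup>2 - f p"
  have "(dist p x0)\<^sup>2 - (t * b)\<^sup>2 \<le> 0"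
  proof (rule nonpos_if_divide_bounded)
    show "0 < 2 * \<tau>"
      using tau unfolding tau_adm_def by simp
    fix \<epsilon> :: real
    assume "0 < \<epsilon>" "\<epsilon> \<le> 2 * \<tau>"
    then have "tau_adm lam (\<epsilon> / 2)"
      by (intro tau_adm_mono[OF tau]) auto
    then have "f p + (dist p x0)\<^sup>2 / \<epsilon>
      \<le> (1 - t) * f x0 + t * (f z + b\<^sup>2 / \<epsilon>) - (2 / \<epsilon> + lam) / 2 * t * (1 - t) * b\<^sup>2"
      using ineq[of "\<epsilon> / 2"] by (simp add: b_def dist_commute)
    \<comment> \<open>the \<open>1/\<epsilon>\<close> parts of the two quadratic terms on the right combine to \<open>(t b)\<^sup>2/\<epsilon>\<close>\<close>
    also have "\<dots> = M + f p + (t * b)\<^sup>2 / \<epsilon>"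
      using \<open>0 < \<epsilon>\<close> unfolding M_def by (simp add: field_simps power2_eq_square)
    finally show "((dist p x0)\<^sup>2 - (t * b)\<^sup>2) / \<epsilon> \<le> M"
      by (simp add: diff_divide_distrib)
  qed
  then have "(dist p x0)\<^sup>2 \<le> (t * b)\<^sup>2"
    by simp
  then show ?thesis
    using \<open>0 \<le> t\<close> power2_le_imp_le[of "dist p x0" "t * b"] by (simp add: b_def)
qed

lemma lower_bound_from_chord_ineq:
  fixes f0 f1 c r b t \<tau> lam :: real
  assumes "0 < r" "r \<le> b" "0 < \<tau>" and t: "t = r / (2 * b)"
    and chord: "c \<le> (1 - t) * f0 + t * (f1 + b\<^sup>2 / (2 * \<tau>)) - (1 / \<tau> + lam) / 2 * t * (1 - t) * b\<^sup>2"
  shows "f0 - (2 * (f0 - c) / r + r * (1 / \<tau> + lam) / 4) * b + lam / 2 * b\<^sup>2 \<le> f1"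
proof -
  have "0 < b" "0 < t"
    using assms by auto
  have "t * (f0 - (2 * (f0 - c) / r + r * (1 / \<tau> + lam) / 4) * b + lam / 2 * b\<^sup>2)
      = c - (1 - t) * f0 - t * b\<^sup>2 / (2 * \<tau>) + (1 / \<tau> + lam) / 2 * t * (1 - t) * b\<^sup>2"
    using \<open>0 < r\<close> \<open>0 < b\<close> \<open>0 < \<tau>\<close> unfolding t by (simp add: field_simps power2_eq_square)
  also have "\<dots> \<le> t * f1"
    using chord by (simp add: algebra_simps)
  finally show ?thesis
    using \<open>0 < t\<close> by simp
qed

lemma completing_square_lower_bound:
  fixes c K lm b s e \<tau> v :: real
  assumes v: "c - K * b - lm / 2 * b\<^sup>2 \<le> v" and "0 \<le> K" "0 \<le> lm"
    and b: "0 \<le> b" "b \<le> s + e" and "0 \<le> s" "0 \<le> e"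
    and "0 < \<tau>" "lm * \<tau> < 1"
  shows "c - K * e - lm / 2 * e\<^sup>2 - (K + lm * e)\<^sup>2 / (4 * (1 / (2 * \<tau>) - lm / 2)) \<le> v + s\<^sup>2 / (2 * \<tau>)"
proof -
  define a where "a = 1 / (2 * \<tau>) - lm / 2"
  define P where "P = K + lm * e"
  have "0 < a"
    using \<open>0 < \<tau>\<close> \<open>lm * \<tau> < 1\<close> by (simp add: a_def field_simps)
  have "K * b + lm / 2 * b\<^sup>2 \<le> K * (s + e) + lm / 2 * (s + e)\<^sup>2"
    using assms by (intro add_mono mult_left_mono power_mono) auto
  then have "c - K * e - lm / 2 * e\<^sup>2 + (a * s\<^sup>2 - P * s) \<le> v + s\<^sup>2 / (2 * \<tau>)"
    using v by (simp add: a_def P_def algebra_simps power2_eq_square)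
  moreover have "- (P\<^sup>2 / (4 * a)) \<le> a * s\<^sup>2 - P * s"
  proof -
    have "0 \<le> (2 * a * s - P)\<^sup>2"
      by simp
    also have "\<dots> = 4 * a * (a * s\<^sup>2 - P * s) + P\<^sup>2"
      by (simp add: algebra_simps power2_eq_square)
    finally show ?thesis
      using \<open>0 < a\<close> by (simp add: field_simps)
  qed
  ultimately show ?thesis
    unfolding a_def P_def by linarith
qed

lemma lower_bound_along_curve:
  fixes f :: "'a::metric_space \<Rightarrow> real"
  assumes tau: "tau_adm lam \<tau>" and "0 < r" and far: "r \<le> dist z x0"
    and near: "\<And>w. w \<in> S \<Longrightarrow> dist w x0 < r \<Longrightarrow> c \<le> f w"
    and curve: "\<forall>t\<in>{0..1}. \<gamma> t \<in> S \<and>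
      (\<forall>\<tau>'. tau_adm lam \<tau>' \<longrightarrow> f (\<gamma> t) + (dist (\<gamma> t) x0)\<^sup>2 / (2 * \<tau>')
        \<le> (1 - t) * f x0 + t * (f z + (dist z x0)\<^sup>2 / (2 * \<tau>'))
           - (1 / \<tau>' + lam) / 2 * t * (1 - t) * (dist x0 z)\<^sup>2)"
  shows "f x0 - (2 * (f x0 - c) / r + r * (1 / \<tau> + lam) / 4) * dist z x0 + lam / 2 * (dist z x0)\<^sup>2 \<le> f z"
proof -
  define b where "b = dist z x0"
  have "0 < \<tau>"
    using tau unfolding tau_adm_def by simp
  \<comment> \<open>the point of the curve at parameter \<open>t\<close> lies within \<open>t b = r/2\<close> of \<open>x0\<close>, where \<open>f \<ge> c\<close>\<close>
  define t where "t = r / (2 * b)"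
  have "0 < b"
    using far \<open>0 < r\<close> unfolding b_def by linarith
  then have "t \<in> {0..1}" and tb: "t * b = r / 2"
    using far \<open>0 < r\<close> by (auto simp: t_def b_def field_simps)
  then have "\<gamma> t \<in> S" and ineq: "\<And>\<tau>'. tau_adm lam \<tau>' \<Longrightarrow> f (\<gamma> t) + (dist (\<gamma> t) x0)\<^sup>2 / (2 * \<tau>')
      \<le> (1 - t) * f x0 + t * (f z + (dist z x0)\<^sup>2 / (2 * \<tau>'))
         - (1 / \<tau>' + lam) / 2 * t * (1 - t) * (dist x0 z)\<^sup>2"
    using curve by auto
  have "dist (\<gamma> t) x0 \<le> t * b"
    using curve_point_dist_le[OF tau _ ineq] \<open>t \<in> {0..1}\<close> by (simp add: b_def)
  then have "c \<le> f (\<gamma> t)"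
    using near[OF \<open>\<gamma> t \<in> S\<close>] tb \<open>0 < r\<close> by simp
  moreover have "0 \<le> (dist (\<gamma> t) x0)\<^sup>2 / (2 * \<tau>)"
    using \<open>0 < \<tau>\<close> by simp
  ultimately have "c \<le> (1 - t) * f x0 + t * (f z + b\<^sup>2 / (2 * \<tau>)) - (1 / \<tau> + lam) / 2 * t * (1 - t) * b\<^sup>2"
    using ineq[OF tau] unfolding b_def dist_commute[of x0 z] by linarith
  then show ?thesis
    using lower_bound_from_chord_ineq[OF \<open>0 < r\<close> _ \<open>0 < \<tau>\<close> t_def] far by (simp add: b_def)
qed

lemma linear_quadratic_minorant:
  fixes f :: "'a::metric_space \<Rightarrow> real"
  assumes tau: "tau_adm lam \<tau>" and "0 < r" and "c \<le> f x0"
    and near: "\<And>w. w \<in> S \<Longrightarrow> dist w x0 < r \<Longrightarrow> c \<le> f w"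
    and curves: "\<And>z. z \<in> S \<Longrightarrow> \<exists>\<gamma>. \<forall>t\<in>{0..1}. \<gamma> t \<in> S \<and>
      (\<forall>\<tau>'. tau_adm lam \<tau>' \<longrightarrow> f (\<gamma> t) + (dist (\<gamma> t) x0)\<^sup>2 / (2 * \<tau>')
        \<le> (1 - t) * f x0 + t * (f z + (dist z x0)\<^sup>2 / (2 * \<tau>'))
           - (1 / \<tau>' + lam) / 2 * t * (1 - t) * (dist x0 z)\<^sup>2)"
  shows "\<exists>K\<ge>0. \<forall>z\<in>S. c - K * dist z x0 - lambda_minus lam / 2 * (dist z x0)\<^sup>2 \<le> f z"
proof (intro exI conjI ballI)
  define K where "K = 2 * (f x0 - c) / r + r * (1 / \<tau> + lam) / 4"
  show "0 \<le> K"
    using tau_adm_modulus_pos[OF tau] \<open>0 < r\<close> \<open>c \<le> f x0\<close> by (simp add: K_def)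
  fix z
  assume "z \<in> S"
  define b where "b = dist z x0"
  have "0 \<le> lambda_minus lam" "- lam \<le> lambda_minus lam"
    unfolding lambda_minus_def by simp_all
  show "c - K * b - lambda_minus lam / 2 * b\<^sup>2 \<le> f z"
  proof (cases "b < r")
    case True
    moreover have "0 \<le> K * b" "0 \<le> lambda_minus lam / 2 * b\<^sup>2"
      using \<open>0 \<le> K\<close> \<open>0 \<le> lambda_minus lam\<close> by (simp_all add: b_def)
    ultimately show ?thesis
      using near[OF \<open>z \<in> S\<close>] by (simp add: b_def)
  next
    case False
    obtain \<gamma> where curve: "\<forall>t\<in>{0..1}. \<gamma> t \<in> S \<and>
      (\<forall>\<tau>'. tau_adm lam \<tau>' \<longrightarrow> f (\<gamma> t) + (dist (\<gamma> t) x0)\<^sup>2 / (2 * \<tau>')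
        \<le> (1 - t) * f x0 + t * (f z + (dist z x0)\<^sup>2 / (2 * \<tau>'))
           - (1 / \<tau>' + lam) / 2 * t * (1 - t) * (dist x0 z)\<^sup>2)"
      using curves[OF \<open>z \<in> S\<close>] by blast
    have "f x0 - K * b + lam / 2 * b\<^sup>2 \<le> f z"
      using lower_bound_along_curve[OF tau \<open>0 < r\<close> _ near curve] False
      by (simp add: K_def b_def)
    moreover have "- lambda_minus lam / 2 * b\<^sup>2 \<le> lam / 2 * b\<^sup>2"
      using \<open>- lam \<le> lambda_minus lam\<close> by (intro mult_right_mono) auto
    ultimately show ?thesis
      using \<open>c \<le> f x0\<close> by linarith
  qed
qed

definition convex_along :: "('a::metric_space \<Rightarrow> ereal) \<Rightarrow> real \<Rightarrow> (real \<Rightarrow> 'a) \<Rightarrow> bool" where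
  "convex_along h \<mu> \<gamma> \<longleftrightarrow> (\<forall>t\<in>{0..1}.
      h (\<gamma> t) \<le> ereal (1 - t) * h (\<gamma> 0) + ereal t * h (\<gamma> 1)
                 - ereal (\<mu> / 2 * t * (1 - t) * (dist (\<gamma> 0) (\<gamma> 1))\<^sup>2))"

lemma cc_along_imp_convex_along_fst: "cc_along f \<mu> \<gamma> \<sigma> \<Longrightarrow> convex_along (\<lambda>x. f x y) \<mu> \<gamma>"
  unfolding cc_along_def convex_along_def by blast

lemma ereal_uminus_add3_le: "- (a + b + c) \<le> - a + - b + - (c :: ereal)"
  by (cases a; cases b; cases c) auto

lemma cc_along_imp_convex_along_snd: "cc_along f \<mu> \<gamma> \<sigma> \<Longrightarrow> convex_along (\<lambda>y. - f x y) \<mu> \<sigma>"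
  unfolding convex_along_def
proof
  fix t :: real
  assume "cc_along f \<mu> \<gamma> \<sigma>" "t \<in> {0..1}"
  then have "- f x (\<sigma> t) \<le> - (ereal (1 - t) * f x (\<sigma> 0) + ereal t * f x (\<sigma> 1)
      + ereal (\<mu> / 2 * t * (1 - t) * (dist (\<sigma> 0) (\<sigma> 1))\<^sup>2))"
    unfolding cc_along_def by simp
  also have "\<dots> \<le> ereal (1 - t) * - f x (\<sigma> 0) + ereal t * - f x (\<sigma> 1)
      - ereal (\<mu> / 2 * t * (1 - t) * (dist (\<sigma> 0) (\<sigma> 1))\<^sup>2)"
    using ereal_uminus_add3_le[of "ereal (1 - t) * f x (\<sigma> 0)" "ereal t * f x (\<sigma> 1)"
        "ereal (\<mu> / 2 * t * (1 - t) * (dist (\<sigma> 0) (\<sigma> 1))\<^sup>2)"]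
    by (simp add: minus_ereal_def)
  finally show "- f x (\<sigma> t) \<le> ereal (1 - t) * - f x (\<sigma> 0) + ereal t * - f x (\<sigma> 1)
      - ereal (\<mu> / 2 * t * (1 - t) * (dist (\<sigma> 0) (\<sigma> 1))\<^sup>2)" .
qed

lemma convex_along_finite_endpoints:
  fixes g :: "'a::metric_space \<Rightarrow> ereal"
  assumes "convex_along (\<lambda>w. g w + ereal (h w)) \<mu> \<gamma>" and "t \<in> {0..1}"
    and "-\<infinity> < g (\<gamma> t)" and "g (\<gamma> 0) = ereal a" and "g (\<gamma> 1) = ereal b"
  shows "g (\<gamma> t) < \<infinity> \<and> real_of_ereal (g (\<gamma> t)) + h (\<gamma> t)
    \<le> (1 - t) * (a + h (\<gamma> 0)) + t * (b + h (\<gamma> 1)) - \<mu> / 2 * t * (1 - t) * (dist (\<gamma> 0) (\<gamma> 1))\<^sup>2"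
proof -
  have "g (\<gamma> t) + ereal (h (\<gamma> t))
    \<le> ereal ((1 - t) * (a + h (\<gamma> 0)) + t * (b + h (\<gamma> 1)) - \<mu> / 2 * t * (1 - t) * (dist (\<gamma> 0) (\<gamma> 1))\<^sup>2)"
    using assms unfolding convex_along_def by simp
  then show ?thesis
    using \<open>-\<infinity> < g (\<gamma> t)\<close> by (cases "g (\<gamma> t)") auto
qed

lemma lsc_fun_uminus: "usc_fun f \<Longrightarrow> lsc_fun (\<lambda>x. - f x)"
proof -
  have "{x. c < - f x} = {x. f x < - c}" for c
    by (auto simp: ereal_less_uminus_reorder)
  then show "usc_fun f \<Longrightarrow> lsc_fun (\<lambda>x. - f x)"
    unfolding usc_fun_def lsc_fun_def by simp
qed

definition moreau_envelope :: "('a::metric_space \<Rightarrow> ereal) \<Rightarrow> real \<Rightarrow> 'a \<Rightarrow> ereal" where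
  "moreau_envelope g \<tau> x = (INF z. g z + ereal ((dist z x)\<^sup>2 / (2 * \<tau>)))"

lemma phiY_tau_eq_moreau_envelope: "phiY_tau \<phi> \<tau> x y' = moreau_envelope (\<lambda>z. \<phi> z y') \<tau> x"
  unfolding phiY_tau_def moreau_envelope_def ..

lemma phiX_tau_eq_uminus_moreau_envelope:
  "phiX_tau \<phi> \<tau> y x' = - moreau_envelope (\<lambda>w. - \<phi> x' w) \<tau> y"
proof -
  have "\<phi> x' w - ereal c = - (- \<phi> x' w + ereal c)" for w c
    by (cases "\<phi> x' w") auto
  then show ?thesis
    unfolding phiX_tau_def moreau_envelope_def ereal_SUP_uminus_eq[symmetric] by simp
qed

lemma moreau_envelope_gt_MInf_if_minorant:
  fixes g :: "'a::metric_space \<Rightarrow> ereal"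
  assumes tau: "tau_adm lam \<tau>" and "0 \<le> K"
    and minorant: "\<And>z. ereal (c - K * dist z x0 - lambda_minus lam / 2 * (dist z x0)\<^sup>2) \<le> g z"
  shows "-\<infinity> < moreau_envelope g \<tau> x"
proof -
  define e where "e = dist x x0"
  define B where "B = c - K * e - lambda_minus lam / 2 * e\<^sup>2
    - (K + lambda_minus lam * e)\<^sup>2 / (4 * (1 / (2 * \<tau>) - lambda_minus lam / 2))"
  have "ereal B \<le> g z + ereal ((dist z x)\<^sup>2 / (2 * \<tau>))" for z
  proof -
    have "B \<le> (c - K * dist z x0 - lambda_minus lam / 2 * (dist z x0)\<^sup>2) + (dist z x)\<^sup>2 / (2 * \<tau>)"
      unfolding B_def
    proof (rule completing_square_lower_bound[OF order_refl \<open>0 \<le> K\<close>])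
      show "dist z x0 \<le> dist z x + e"
        unfolding e_def by (rule dist_triangle)
      show "0 < \<tau>" "lambda_minus lam * \<tau> < 1"
        using tau tau_adm_lambda_minus unfolding tau_adm_def by auto
    qed (auto simp: e_def lambda_minus_def)
    then have "ereal B \<le> ereal (c - K * dist z x0 - lambda_minus lam / 2 * (dist z x0)\<^sup>2)
        + ereal ((dist z x)\<^sup>2 / (2 * \<tau>))"
      by simp
    also have "\<dots> \<le> g z + ereal ((dist z x)\<^sup>2 / (2 * \<tau>))"
      by (rule add_right_mono[OF minorant])
    finally show ?thesis .
  qed
  then have "ereal B \<le> moreau_envelope g \<tau> x"
    unfolding moreau_envelope_def by (rule INF_greatest)
  then show ?thesis
    using less_le_trans[of "-\<infinity>" "ereal B"] by simp
qed

lemma moreau_envelope_gt_MInf: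
  fixes g :: "'a::metric_space \<Rightarrow> ereal"
  assumes tau: "tau_adm lam \<tau>" and g_gt: "\<And>z. -\<infinity> < g z" and "g x0 < \<infinity>" and lsc: "lsc_fun g"
    and curves: "\<And>z. g z < \<infinity> \<Longrightarrow> \<exists>\<gamma>. \<gamma> 0 = x0 \<and> \<gamma> 1 = z \<and> (\<forall>\<tau>'. tau_adm lam \<tau>' \<longrightarrow>
      convex_along (\<lambda>w. g w + ereal ((dist w x0)\<^sup>2 / (2 * \<tau>'))) (1 / \<tau>' + lam) \<gamma>)"
  shows "-\<infinity> < moreau_envelope g \<tau> x"
proof -
  define S where "S = {z. g z < \<infinity>}"
  define f where "f z = real_of_ereal (g z)" for z
  have g_eq: "g z = ereal (f z)" if "z \<in> S" for z
    using that g_gt[of z] unfolding S_def f_def by (cases "g z") auto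
  have "x0 \<in> S"
    using \<open>g x0 < \<infinity>\<close> by (simp add: S_def)
  have "open {w. ereal (f x0 - 1) < g w}" and "x0 \<in> {w. ereal (f x0 - 1) < g w}"
    using lsc g_eq[OF \<open>x0 \<in> S\<close>] unfolding lsc_fun_def by auto
  then obtain r where "0 < r" and near: "\<And>w. dist w x0 < r \<Longrightarrow> ereal (f x0 - 1) < g w"
    unfolding open_dist by blast
  have "\<exists>\<gamma>. \<forall>t\<in>{0..1}. \<gamma> t \<in> S \<and>
      (\<forall>\<tau>'. tau_adm lam \<tau>' \<longrightarrow> f (\<gamma> t) + (dist (\<gamma> t) x0)\<^sup>2 / (2 * \<tau>')
        \<le> (1 - t) * f x0 + t * (f z + (dist z x0)\<^sup>2 / (2 * \<tau>'))
           - (1 / \<tau>' + lam) / 2 * t * (1 - t) * (dist x0 z)\<^sup>2)" if "z \<in> S" for z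
  proof -
    obtain \<gamma> where "\<gamma> 0 = x0" "\<gamma> 1 = z" and convex: "\<And>\<tau>'. tau_adm lam \<tau>' \<Longrightarrow>
        convex_along (\<lambda>w. g w + ereal ((dist w x0)\<^sup>2 / (2 * \<tau>'))) (1 / \<tau>' + lam) \<gamma>"
      using curves \<open>z \<in> S\<close> unfolding S_def by blast
    note finite = convex_along_finite_endpoints[OF convex _ g_gt,
        unfolded \<open>\<gamma> 0 = x0\<close> \<open>\<gamma> 1 = z\<close>, OF _ _ g_eq[OF \<open>x0 \<in> S\<close>] g_eq[OF \<open>z \<in> S\<close>]]
    have "\<gamma> t \<in> S" if "t \<in> {0..1}" for t
      using finite[OF tau that] by (simp add: S_def)
    with finite show ?thesis
      by (intro exI[of _ \<gamma>]) (auto simp: f_def)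
  qed
  then obtain K where "0 \<le> K"
    and minorant: "\<And>z. z \<in> S \<Longrightarrow> f x0 - 1 - K * dist z x0 - lambda_minus lam / 2 * (dist z x0)\<^sup>2 \<le> f z"
    using linear_quadratic_minorant[OF tau \<open>0 < r\<close>, of "f x0 - 1" f x0 S] near g_eq by force
  have "ereal (f x0 - 1 - K * dist z x0 - lambda_minus lam / 2 * (dist z x0)\<^sup>2) \<le> g z" for z
    using minorant[of z] g_eq[of z] by (cases "z \<in> S") (auto simp: S_def top.not_eq_extremum)
  then show ?thesis
    by (rule moreau_envelope_gt_MInf_if_minorant[OF tau \<open>0 \<le> K\<close>])
qed

lemma phiY_tau_gt_MInf:
  fixes \<phi> :: "'a::metric_space \<Rightarrow> 'b::metric_space \<Rightarrow> ereal"
  assumes "closed_fun \<phi>" "A1 \<phi>" "A2 \<phi> lam" "tau_adm lam \<tau>" "x' \<in> DX \<phi>" "y' \<in> DY \<phi>"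
  shows "-\<infinity> < phiY_tau \<phi> \<tau> x y'"
  unfolding phiY_tau_eq_moreau_envelope
proof (rule moreau_envelope_gt_MInf[OF \<open>tau_adm lam \<tau>\<close>])
  show "-\<infinity> < \<phi> z y'" for z
    using \<open>y' \<in> DY \<phi>\<close> unfolding DY_def by simp
  show "\<phi> x' y' < \<infinity>"
    using \<open>x' \<in> DX \<phi>\<close> unfolding DX_def by simp
  show "lsc_fun (\<lambda>z. \<phi> z y')"
    using \<open>closed_fun \<phi>\<close> \<open>y' \<in> DY \<phi>\<close> unfolding closed_fun_def by blast
  fix z
  assume "\<phi> z y' < \<infinity>"
  then have "z \<in> DX \<phi>"
    using \<open>A1 \<phi>\<close> \<open>y' \<in> DY \<phi>\<close> unfolding A1_def by force
  then obtain \<gamma> \<sigma> where "\<gamma> 0 = x'" "\<gamma> 1 = z"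
    and cc: "\<forall>\<tau>'. tau_adm lam \<tau>' \<longrightarrow> cc_along (Phi_tau \<phi> \<tau>' x' y') (1 / \<tau>' + lam) \<gamma> \<sigma>"
    using \<open>A2 \<phi> lam\<close> \<open>x' \<in> DX \<phi>\<close> \<open>y' \<in> DY \<phi>\<close> unfolding A2_def by blast
  have "Phi_tau \<phi> \<tau>' x' y' w y' = \<phi> w y' + ereal ((dist w x')\<^sup>2 / (2 * \<tau>'))" for \<tau>' w
    by (simp add: Phi_tau_def)
  then have "convex_along (\<lambda>w. \<phi> w y' + ereal ((dist w x')\<^sup>2 / (2 * \<tau>'))) (1 / \<tau>' + lam) \<gamma>"
    if "tau_adm lam \<tau>'" for \<tau>'
    using cc_along_imp_convex_along_fst[of "Phi_tau \<phi> \<tau>' x' y'" _ \<gamma> \<sigma> y'] cc that by simp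
  then show "\<exists>\<gamma>. \<gamma> 0 = x' \<and> \<gamma> 1 = z \<and> (\<forall>\<tau>'. tau_adm lam \<tau>' \<longrightarrow>
      convex_along (\<lambda>w. \<phi> w y' + ereal ((dist w x')\<^sup>2 / (2 * \<tau>'))) (1 / \<tau>' + lam) \<gamma>)"
    using \<open>\<gamma> 0 = x'\<close> \<open>\<gamma> 1 = z\<close> by blast
qed

lemma phiX_tau_lt_PInf:
  fixes \<phi> :: "'a::metric_space \<Rightarrow> 'b::metric_space \<Rightarrow> ereal"
  assumes "closed_fun \<phi>" "A1 \<phi>" "A2 \<phi> lam" "tau_adm lam \<tau>" "x' \<in> DX \<phi>" "y' \<in> DY \<phi>"
  shows "phiX_tau \<phi> \<tau> y x' < \<infinity>"
proof -
  have "-\<infinity> < moreau_envelope (\<lambda>w. - \<phi> x' w) \<tau> y"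
  proof (rule moreau_envelope_gt_MInf[OF \<open>tau_adm lam \<tau>\<close>])
    show "-\<infinity> < - \<phi> x' w" for w
      using \<open>x' \<in> DX \<phi>\<close> unfolding DX_def by simp
    show "- \<phi> x' y' < \<infinity>"
      using \<open>y' \<in> DY \<phi>\<close> unfolding DY_def by (cases "\<phi> x' y'") auto
    show "lsc_fun (\<lambda>w. - \<phi> x' w)"
      using \<open>closed_fun \<phi>\<close> \<open>x' \<in> DX \<phi>\<close> lsc_fun_uminus unfolding closed_fun_def by blast
    fix z
    assume "- \<phi> x' z < \<infinity>"
    then have "z \<in> DY \<phi>"
      using \<open>A1 \<phi>\<close> \<open>x' \<in> DX \<phi>\<close> unfolding A1_def by force
    then obtain \<gamma> \<sigma> where "\<sigma> 0 = y'" "\<sigma> 1 = z"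
      and cc: "\<forall>\<tau>'. tau_adm lam \<tau>' \<longrightarrow> cc_along (Phi_tau \<phi> \<tau>' x' y') (1 / \<tau>' + lam) \<gamma> \<sigma>"
      using \<open>A2 \<phi> lam\<close> \<open>x' \<in> DX \<phi>\<close> \<open>y' \<in> DY \<phi>\<close> unfolding A2_def by blast
    have "- Phi_tau \<phi> \<tau>' x' y' x' w = - \<phi> x' w + ereal ((dist w y')\<^sup>2 / (2 * \<tau>'))" for \<tau>' w
      by (cases "\<phi> x' w") (simp_all add: Phi_tau_def)
    then have "convex_along (\<lambda>w. - \<phi> x' w + ereal ((dist w y')\<^sup>2 / (2 * \<tau>'))) (1 / \<tau>' + lam) \<sigma>"
      if "tau_adm lam \<tau>'" for \<tau>'
      using cc_along_imp_convex_along_snd[of "Phi_tau \<phi> \<tau>' x' y'" _ \<gamma> \<sigma> x'] cc that by simp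
    then show "\<exists>\<sigma>. \<sigma> 0 = y' \<and> \<sigma> 1 = z \<and> (\<forall>\<tau>'. tau_adm lam \<tau>' \<longrightarrow>
        convex_along (\<lambda>w. - \<phi> x' w + ereal ((dist w y')\<^sup>2 / (2 * \<tau>'))) (1 / \<tau>' + lam) \<sigma>)"
      using \<open>\<sigma> 0 = y'\<close> \<open>\<sigma> 1 = z\<close> by blast
  qed
  then show ?thesis
    unfolding phiX_tau_eq_uminus_moreau_envelope by (simp add: ereal_uminus_eq_reorder)
qed

theorem mainTheorem8:
  fixes \<phi> :: "'a::complete_space \<Rightarrow> 'b::complete_space \<Rightarrow> ereal"
    and lam \<tau> :: real and x' :: 'a and y' :: 'b
  assumes "proper_fun \<phi>" and "closed_fun \<phi>"
    and "A1 \<phi>" and "A2 \<phi> lam"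
    and "tau_adm lam \<tau>"
    and "x' \<in> DX \<phi>" and "y' \<in> DY \<phi>"
  shows "(\<forall>x. phiY_tau \<phi> \<tau> x y' > -\<infinity>) \<and> (\<forall>y. phiX_tau \<phi> \<tau> y x' < \<infinity>)"
  using phiY_tau_gt_MInf[OF assms(2-7)] phiX_tau_lt_PInf[OF assms(2-7)] by blast

end
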